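(* Let $(V,\Omega)$ be a finite-dimensional real symplectic vector space and let $\theta^0$ be the one-form on $V$ given by $\theta^0_z(v_z)=\frac{1}{2}\Omega(z,v)$ for $z,v\in V$. Then the group ${\rm Aut}(V,\theta^0)$ of all diffeomorphisms $g:V\to V$ with $g^*\theta^0=\theta^0$ equals the linear symplectic group ${\rm Sp}(V,\Omega)$.
   Context: $V$ is a finite-dimensional real vector space and $\Omega$ is a nonsingular alternating bilinear form on $V$. For $z,v\in V$, $v_z\in T_zV$ denotes the tangent vector at $z$ corresponding to $v$ under the canonical identification $T_zV\cong V$ (i.e. $v_z\psi=\frac{d}{dt}\psi(z+tv)|_{t=0}$). For a smooth map $g:V\to V$ and a one-form $\theta$, $(g^*\theta)_z(v_z)=\theta_{g(z)}((g'_z v)_{g(z)})$, where $g'_z$ is the derivative of $g$ at $z$. ${\rm Sp}(V,\Omega)$ is the group of linear automorphisms $g$ of $V$ with $\Omega(gx,gy)=\Omega(x,y)$ for all $x,y\in V$. *)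

theory Defs
  imports "HOL-Analysis.Analysis"
begin

text \<open>C-infinity maps: F k x vs is the k-th derivative of f at x applied to the
  directions vs; each is (Frechet) differentiable in x with derivative given by the next one.\<close>
definition smooth_map :: "('a::real_normed_vector \<Rightarrow> 'b::real_normed_vector) \<Rightarrow> bool" where
  "smooth_map f \<longleftrightarrow> (\<exists>F :: nat \<Rightarrow> 'a \<Rightarrow> 'a list \<Rightarrow> 'b.
      (\<forall>x. F 0 x [] = f x) \<and>
      (\<forall>k vs x. length vs = k \<longrightarrow>
         ((\<lambda>y. F k y vs) has_derivative (\<lambda>v. F (Suc k) x (v # vs))) (at x)))"

definition diffeomorphism :: "('a::real_normed_vector \<Rightarrow> 'a) \<Rightarrow> bool" where
  "diffeomorphism g \<longleftrightarrow> bij g \<and> smooth_map g \<and> smooth_map (inv g)"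

definition symplectic_form :: "('a::real_vector \<Rightarrow> 'a \<Rightarrow> real) \<Rightarrow> bool" where
  "symplectic_form \<Omega> \<longleftrightarrow> bilinear \<Omega> \<and> (\<forall>x. \<Omega> x x = 0) \<and> (\<forall>x. (\<forall>y. \<Omega> x y = 0) \<longrightarrow> x = 0)"

text \<open>One-forms on V are represented as maps z v \<mapsto> theta_z(v_z).\<close>
definition theta0 :: "('a \<Rightarrow> 'a \<Rightarrow> real) \<Rightarrow> 'a \<Rightarrow> 'a \<Rightarrow> real" where
  "theta0 \<Omega> z v = (1/2) * \<Omega> z v"

definition pullback :: "('a::real_normed_vector \<Rightarrow> 'a) \<Rightarrow> ('a \<Rightarrow> 'a \<Rightarrow> real) \<Rightarrow> 'a \<Rightarrow> 'a \<Rightarrow> real" where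
  "pullback g \<theta> z v = \<theta> (g z) (frechet_derivative g (at z) v)"

definition Aut :: "('a::real_normed_vector \<Rightarrow> 'a \<Rightarrow> real) \<Rightarrow> ('a \<Rightarrow> 'a) set" where
  "Aut \<theta> = {g. diffeomorphism g \<and> pullback g \<theta> = \<theta>}"

definition Sp :: "('a::real_vector \<Rightarrow> 'a \<Rightarrow> real) \<Rightarrow> ('a \<Rightarrow> 'a) set" where
  "Sp \<Omega> = {g. linear g \<and> bij g \<and> (\<forall>x y. \<Omega> (g x) (g y) = \<Omega> x y)}"

end

theory Submission
  imports Defs
begin

text \<open>A linear symplectic map is its own derivative, so it preserves \<open>\<theta>\<^sup>0\<close> directly.
  Conversely, \<open>g\<^sup>*\<theta>\<^sup>0 = \<theta>\<^sup>0\<close> says \<open>\<Omega> (g z) (Dg\<^sub>z v) = \<Omega> z v\<close>. Differentiating this in \<open>z\<close>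
  and using the symmetry of second derivatives shows that every \<open>Dg\<^sub>z\<close> is symplectic, hence
  invertible, and comparing with the original identity gives Euler's relation \<open>g z = Dg\<^sub>z z\<close>.
  So \<open>g\<close> is positively homogeneous of degree one, and a positively homogeneous map that is
  differentiable at \<open>0\<close> coincides with its derivative there.\<close>

lemma smooth_map_bounded_linear:
  fixes f :: "'a::real_normed_vector \<Rightarrow> 'b::real_normed_vector"
  assumes "bounded_linear f"
  shows "smooth_map f"
  unfolding smooth_map_def
proof (intro exI conjI allI impI)
  define F :: "nat \<Rightarrow> 'a \<Rightarrow> 'a list \<Rightarrow> 'b" where
    "F k x vs = (case k of 0 \<Rightarrow> f x | Suc 0 \<Rightarrow> f (hd vs) | Suc (Suc _) \<Rightarrow> 0)" for k x vs
  show "F 0 x [] = f x" for x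
    by (simp add: F_def)
  show "((\<lambda>y. F k y vs) has_derivative (\<lambda>v. F (Suc k) x (v # vs))) (at x)" for k vs x
    using assms by (cases k; cases "k - 1") (auto simp: F_def bounded_linear_imp_has_derivative)
qed

lemma smooth_map_second_derivative:
  fixes g :: "'a::real_normed_vector \<Rightarrow> 'b::real_normed_vector"
  assumes "smooth_map g"
  obtains D E where "\<And>z. (g has_derivative D z) (at z)"
    and "\<And>z v. ((\<lambda>y. D y v) has_derivative (\<lambda>u. E z u v)) (at z)"
proof -
  obtain F :: "nat \<Rightarrow> 'a \<Rightarrow> 'a list \<Rightarrow> 'b" where F0: "\<And>x. F 0 x [] = g x"
    and FD: "\<And>k vs x. length vs = k \<Longrightarrow>
         ((\<lambda>y. F k y vs) has_derivative (\<lambda>v. F (Suc k) x (v # vs))) (at x)"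
    using assms unfolding smooth_map_def by blast
  show thesis
  proof
    show "(g has_derivative (\<lambda>v. F 1 z [v])) (at z)" for z
      using FD[of "[]" 0 z] F0 by simp
    show "((\<lambda>y. F 1 y [v]) has_derivative (\<lambda>u. F 2 z [u, v])) (at z)" for z v
      using FD[of "[v]" 1 z] by (simp add: numeral_2_eq_2)
  qed
qed

lemma second_difference_estimate:
  fixes f :: "'a::real_normed_vector \<Rightarrow> real"
  assumes Df: "\<And>y. (f has_derivative Df y) (at y)"
    and lin: "linear Bv"
    and near: "\<And>y. norm (y - x) < d \<Longrightarrow> \<bar>Df y v - Df x v - Bv (y - x)\<bar> \<le> e * norm (y - x)"
    and h: "h > 0" "h * (norm u + norm v) < d"
    and e: "e \<ge> 0"
  shows "\<bar>f (x + h *\<^sub>R u + h *\<^sub>R v) - f (x + h *\<^sub>R u) - f (x + h *\<^sub>R v) + f x - h\<^sup>2 * Bv u\<bar>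
          \<le> e * h\<^sup>2 * (norm u + 2 * norm v)"
proof -
  define \<phi> where "\<phi> t = f (x + h *\<^sub>R u + t *\<^sub>R v) - f (x + t *\<^sub>R v)" for t
  have line_derivative: "((\<lambda>t. f (p + t *\<^sub>R v)) has_real_derivative Df (p + t *\<^sub>R v) v) (at t)"
    for p t
  proof -
    have "((\<lambda>t. f (p + t *\<^sub>R v)) has_derivative (\<lambda>s. Df (p + t *\<^sub>R v) (s *\<^sub>R v))) (at t)"
      by (rule has_derivative_compose[OF _ Df]) (auto intro!: derivative_eq_intros)
    moreover have "(\<lambda>s. Df (p + t *\<^sub>R v) (s *\<^sub>R v)) = (*) (Df (p + t *\<^sub>R v) v)"
      by (simp add: fun_eq_iff linear_scale[OF has_derivative_linear[OF Df]])
    ultimately show ?thesis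
      by (simp add: has_field_derivative_def)
  qed
  have d\<phi>: "DERIV \<phi> t :> Df (x + h *\<^sub>R u + t *\<^sub>R v) v - Df (x + t *\<^sub>R v) v" for t
    unfolding \<phi>_def by (intro DERIV_diff line_derivative)
  obtain \<tau> where \<tau>: "0 < \<tau>" "\<tau> < h"
    and mvt: "\<phi> h - \<phi> 0 = h * (Df (x + h *\<^sub>R u + \<tau> *\<^sub>R v) v - Df (x + \<tau> *\<^sub>R v) v)"
    using MVT2[OF h(1) d\<phi>] by auto
  define a where "a = x + h *\<^sub>R u + \<tau> *\<^sub>R v"
  define b where "b = x + \<tau> *\<^sub>R v"
  have na: "norm (a - x) \<le> h * (norm u + norm v)"
    unfolding a_def using norm_triangle_ineq[of "h *\<^sub>R u" "\<tau> *\<^sub>R v"] \<tau> h(1)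
      mult_right_mono[of \<tau> h "norm v"] by (simp add: add.assoc distrib_left)
  have "\<bar>Df a v - Df x v - Bv (a - x)\<bar> \<le> e * norm (a - x)"
    using na h(2) by (intro near) linarith
  also have "\<dots> \<le> e * (h * (norm u + norm v))"
    using na e by (rule mult_left_mono)
  finally have Ea: "\<bar>Df a v - Df x v - Bv (a - x)\<bar> \<le> e * (h * (norm u + norm v))" .
  have nb: "norm (b - x) \<le> h * norm v"
    unfolding b_def using \<tau> by (simp add: mult_right_mono)
  have "\<bar>Df b v - Df x v - Bv (b - x)\<bar> \<le> e * norm (b - x)"
    using nb h mult_nonneg_nonneg[OF less_imp_le[OF h(1)] norm_ge_zero[of u]]
    unfolding distrib_left by (intro near) linarith
  also have "\<dots> \<le> e * (h * norm v)"
    using nb e by (rule mult_left_mono)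
  finally have Eb: "\<bar>Df b v - Df x v - Bv (b - x)\<bar> \<le> e * (h * norm v)" .
  have "Bv (a - x) - Bv (b - x) = h * Bv u"
    using lin unfolding a_def b_def by (simp add: linear_add linear_scale)
  then have "\<bar>Df a v - Df b v - h * Bv u\<bar> \<le> e * (h * (norm u + norm v)) + e * (h * norm v)"
    using Ea Eb by arith
  then have K: "\<bar>Df a v - Df b v - h * Bv u\<bar> \<le> e * h * (norm u + 2 * norm v)"
    by (simp add: algebra_simps)
  have "f (x + h *\<^sub>R u + h *\<^sub>R v) - f (x + h *\<^sub>R u) - f (x + h *\<^sub>R v) + f x - h\<^sup>2 * Bv u
      = h * (Df a v - Df b v - h * Bv u)"
    using mvt unfolding \<phi>_def a_def b_def by (simp add: power2_eq_square algebra_simps)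
  also have "\<bar>\<dots>\<bar> \<le> h * (e * h * (norm u + 2 * norm v))"
    using K h(1) by (simp add: abs_mult)
  finally show ?thesis
    by (simp add: power2_eq_square algebra_simps)
qed

text \<open>No continuity of the second derivative is needed: both mixed second differences at
  \<open>x\<close> are \<open>h\<^sup>2 B u v + o(h\<^sup>2)\<close> resp. \<open>h\<^sup>2 B v u + o(h\<^sup>2)\<close>, and they are the same number.\<close>

lemma second_derivative_symmetric:
  fixes f :: "'a::real_normed_vector \<Rightarrow> real"
  assumes Df: "\<And>y. (f has_derivative Df y) (at y)"
    and B: "\<And>v. ((\<lambda>y. Df y v) has_derivative (\<lambda>w. B w v)) (at x)"
  shows "B u v = B v u"
proof -
  define c where "c = 3 * (norm u + norm v)"
  have c: "c \<ge> 0"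
    by (simp add: c_def)
  have bound: "\<bar>B u v - B v u\<bar> \<le> e * c" if e: "e > 0" for e
  proof -
    obtain d1 where d1: "d1 > 0" "\<And>y. norm (y - x) < d1 \<Longrightarrow>
        \<bar>Df y v - Df x v - B (y - x) v\<bar> \<le> e * norm (y - x)"
      using B[of v] e unfolding has_derivative_at_alt real_norm_def by meson
    obtain d2 where d2: "d2 > 0" "\<And>y. norm (y - x) < d2 \<Longrightarrow>
        \<bar>Df y u - Df x u - B (y - x) u\<bar> \<le> e * norm (y - x)"
      using B[of u] e unfolding has_derivative_at_alt real_norm_def by meson
    have n: "norm u + norm v + 1 > 0"
      using norm_ge_zero[of u] norm_ge_zero[of v] by linarith
    define h where "h = min d1 d2 / (norm u + norm v + 1)"
    have h: "h > 0"
      using d1 d2 n by (simp add: h_def)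
    have "h * (norm u + norm v) < h * (norm u + norm v + 1)"
      using h by simp
    also have "\<dots> = min d1 d2"
      using n by (simp add: h_def)
    finally have hd: "h * (norm u + norm v) < min d1 d2" .
    have "\<bar>f (x + h *\<^sub>R u + h *\<^sub>R v) - f (x + h *\<^sub>R u) - f (x + h *\<^sub>R v) + f x - h\<^sup>2 * B u v\<bar>
        \<le> e * h\<^sup>2 * (norm u + 2 * norm v)"
      using B[of v] d1 h hd e
      by (intro second_difference_estimate[OF Df, where Bv = "\<lambda>w. B w v"])
        (auto dest: has_derivative_linear)
    moreover have "\<bar>f (x + h *\<^sub>R v + h *\<^sub>R u) - f (x + h *\<^sub>R v) - f (x + h *\<^sub>R u) + f x - h\<^sup>2 * B v u\<bar>
        \<le> e * h\<^sup>2 * (norm v + 2 * norm u)"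
      using B[of u] d2 h hd e
      by (intro second_difference_estimate[OF Df, where Bv = "\<lambda>w. B w u"])
        (auto simp: add.commute dest: has_derivative_linear)
    ultimately have "\<bar>h\<^sup>2 * B u v - h\<^sup>2 * B v u\<bar> \<le> h\<^sup>2 * (e * c)"
      unfolding c_def by (simp add: algebra_simps)
    then have "h\<^sup>2 * \<bar>B u v - B v u\<bar> \<le> h\<^sup>2 * (e * c)"
      by (metis abs_mult abs_power2 right_diff_distrib)
    then show ?thesis
      using h by simp
  qed
  have "\<bar>B u v - B v u\<bar> \<le> 0"
  proof (rule field_le_epsilon)
    fix \<epsilon> :: real
    assume "\<epsilon> > 0"
    have "\<bar>B u v - B v u\<bar> \<le> \<epsilon> / (c + 1) * c"
      using \<open>\<epsilon> > 0\<close> c by (intro bound) simp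
    also have "\<dots> \<le> \<epsilon>"
      using \<open>\<epsilon> > 0\<close> c by (simp add: field_simps)
    finally show "\<bar>B u v - B v u\<bar> \<le> 0 + \<epsilon>"
      by simp
  qed
  then show ?thesis
    by simp
qed

lemma symplectic_form_antisym:
  assumes "symplectic_form \<Omega>"
  shows "\<Omega> y x = - \<Omega> x y"
proof -
  have "bilinear \<Omega>" and alt: "\<And>x. \<Omega> x x = 0"
    using assms by (auto simp: symplectic_form_def)
  then have "0 = \<Omega> x x + \<Omega> x y + \<Omega> y x + \<Omega> y y"
    by (metis (no_types) bilinear_ladd bilinear_radd add.assoc)
  then show ?thesis
    using alt by simp
qed

lemma Sp_subset_Aut:
  fixes \<Omega> :: "'a::euclidean_space \<Rightarrow> 'a \<Rightarrow> real"
  shows "Sp \<Omega> \<subseteq> Aut (theta0 \<Omega>)"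
proof
  fix g assume "g \<in> Sp \<Omega>"
  then have lin: "linear g" and bij: "bij g" and symp: "\<And>x y. \<Omega> (g x) (g y) = \<Omega> x y"
    by (auto simp: Sp_def)
  have "linear (inv g)"
    using lin bij bij_is_inj inj_linear_imp_inv_bounded_linear linear_conv_bounded_linear by blast
  then have "diffeomorphism g"
    using lin bij by (simp add: diffeomorphism_def smooth_map_bounded_linear linear_conv_bounded_linear)
  moreover have "frechet_derivative g (at z) = g" for z
    using frechet_derivative_at[OF linear_imp_has_derivative[OF lin]] by simp
  then have "pullback g (theta0 \<Omega>) = theta0 \<Omega>"
    by (simp add: fun_eq_iff pullback_def theta0_def symp)
  ultimately show "g \<in> Aut (theta0 \<Omega>)"
    by (simp add: Aut_def)
qed

text \<open>Differentiating \<open>\<Omega> (g z) (D z v) = \<Omega> z v\<close> in the direction \<open>u\<close> gives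
  \<open>\<Omega> (g z) (E z u v) + \<Omega> (D z u) (D z v) = \<Omega> u v\<close>; the first term is symmetric in \<open>u, v\<close>
  while the other two are antisymmetric, so the first term vanishes.\<close>

lemma derivative_symplectic_if_theta0_invariant:
  fixes \<Omega> :: "'a::euclidean_space \<Rightarrow> 'a \<Rightarrow> real"
  assumes \<Omega>: "symplectic_form \<Omega>"
    and dg: "\<And>z. (g has_derivative D z) (at z)"
    and dD: "\<And>z v. ((\<lambda>y. D y v) has_derivative (\<lambda>u. E z u v)) (at z)"
    and invariant: "\<And>z v. \<Omega> (g z) (D z v) = \<Omega> z v"
  shows "\<Omega> (D z u) (D z v) = \<Omega> u v"
proof -
  have bi: "bilinear \<Omega>"
    using \<Omega> by (simp add: symplectic_form_def)
  have differentiated: "\<Omega> (g z) (E z u v) + \<Omega> (D z u) (D z v) = \<Omega> u v" for u v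
  proof -
    have "((\<lambda>y. \<Omega> (g y) (D y v)) has_derivative (\<lambda>u. \<Omega> (g z) (E z u v) + \<Omega> (D z u) (D z v))) (at z)"
      using bounded_bilinear.FDERIV[OF bilinear_conv_bounded_bilinear[THEN iffD1, OF bi] dg dD]
      by simp
    moreover have "((\<lambda>y. \<Omega> (g y) (D y v)) has_derivative (\<lambda>u. \<Omega> u v)) (at z)"
      using bi unfolding invariant bilinear_def by (simp add: linear_imp_has_derivative)
    ultimately show ?thesis
      by (metis has_derivative_unique)
  qed
  have linear_gz: "bounded_linear (\<Omega> (g z))"
    using bi by (simp add: bilinear_def linear_conv_bounded_linear)
  have "\<Omega> (g z) (E z u v) = \<Omega> (g z) (E z v u)"
  proof (rule second_derivative_symmetric[where f = "\<lambda>y. \<Omega> (g z) (g y)"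
        and Df = "\<lambda>y w. \<Omega> (g z) (D y w)" and B = "\<lambda>w v. \<Omega> (g z) (E z w v)" and x = z])
    show "((\<lambda>y. \<Omega> (g z) (g y)) has_derivative (\<lambda>w. \<Omega> (g z) (D y w))) (at y)" for y
      by (rule bounded_linear.has_derivative[OF linear_gz dg])
    show "((\<lambda>y. \<Omega> (g z) (D y v)) has_derivative (\<lambda>w. \<Omega> (g z) (E z w v))) (at z)" for v
      by (rule bounded_linear.has_derivative[OF linear_gz dD])
  qed
  then show ?thesis
    using differentiated[of u v] differentiated[of v u]
      symplectic_form_antisym[OF \<Omega>, of "D z v" "D z u"] symplectic_form_antisym[OF \<Omega>, of v u]
    by linarith
qed

lemma symplectic_linear_surj:
  fixes \<Omega> :: "'a::euclidean_space \<Rightarrow> 'a \<Rightarrow> real"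
  assumes \<Omega>: "symplectic_form \<Omega>" and L: "linear L" and symp: "\<And>u v. \<Omega> (L u) (L v) = \<Omega> u v"
  shows "surj L"
proof -
  have "u = 0" if "L u = 0" for u
  proof -
    have "\<Omega> u w = \<Omega> (L u) (L w)" for w
      by (simp add: symp)
    then show ?thesis
      using \<Omega> that by (simp add: symplectic_form_def bilinear_lzero)
  qed
  then have "inj L"
    using L linear_inj_iff_eq_0 by blast
  then show ?thesis
    using L linear_injective_imp_surjective by blast
qed

lemma symplectic_pairing_eq:
  fixes \<Omega> :: "'a::euclidean_space \<Rightarrow> 'a \<Rightarrow> real"
  assumes \<Omega>: "symplectic_form \<Omega>" and L: "linear L" and symp: "\<And>u v. \<Omega> (L u) (L v) = \<Omega> u v"
    and pairing: "\<And>v. \<Omega> w (L v) = \<Omega> z v"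
  shows "w = L z"
proof -
  have "surj L"
    using \<Omega> L symp by (rule symplectic_linear_surj)
  have "\<Omega> (w - L z) y = 0" for y
  proof -
    obtain v where "y = L v"
      using surjD[OF \<open>surj L\<close>] by blast
    then show ?thesis
      using \<Omega> by (simp add: symplectic_form_def bilinear_lsub pairing symp)
  qed
  then have "w - L z = 0"
    using \<Omega> unfolding symplectic_form_def by blast
  then show ?thesis
    by simp
qed

lemma Euler_relation_imp_positively_homogeneous:
  fixes g :: "'a::real_normed_vector \<Rightarrow> 'b::real_normed_vector"
  assumes dg: "\<And>z. (g has_derivative D z) (at z)" and Euler: "\<And>z. g z = D z z"
    and "t > 0"
  shows "g (t *\<^sub>R z) = t *\<^sub>R g z"
proof -
  \<comment> \<open>Euler's relation makes the derivative of \<open>q\<close> vanish.\<close>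
  define q where "q = (\<lambda>s. inverse s *\<^sub>R g (s *\<^sub>R z))"
  have "(q has_vector_derivative 0) (at s within {0<..})" if "s \<in> {0<..}" for s
  proof -
    have s: "s \<noteq> 0"
      using that by simp
    have lin: "linear (D (s *\<^sub>R z))"
      using dg has_derivative_linear by blast
    have "((\<lambda>s. g (s *\<^sub>R z)) has_derivative (\<lambda>r. D (s *\<^sub>R z) (r *\<^sub>R z))) (at s)"
      by (rule has_derivative_compose[OF _ dg]) (auto intro!: derivative_eq_intros)
    then have "((\<lambda>s. g (s *\<^sub>R z)) has_vector_derivative D (s *\<^sub>R z) z) (at s)"
      using lin by (simp add: has_vector_derivative_def linear_scale)
    from has_vector_derivative_scaleR[OF DERIV_inverse[OF s] this]
    have "(q has_vector_derivative
        inverse s *\<^sub>R D (s *\<^sub>R z) z - inverse s ^ 2 *\<^sub>R g (s *\<^sub>R z)) (at s)"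
      by (simp add: q_def numeral_2_eq_2 algebra_simps)
    moreover have "g (s *\<^sub>R z) = s *\<^sub>R D (s *\<^sub>R z) z"
      using Euler[of "s *\<^sub>R z"] lin by (simp add: linear_scale)
    then have "inverse s *\<^sub>R D (s *\<^sub>R z) z - inverse s ^ 2 *\<^sub>R g (s *\<^sub>R z) = 0"
      using s by (simp add: power2_eq_square)
    ultimately show ?thesis
      by (simp add: has_vector_derivative_at_within)
  qed
  then obtain c where "\<And>s. s \<in> {0<..} \<Longrightarrow> q s = c"
    using has_vector_derivative_zero_constant[of "{0<..}" q] by auto
  then have "q t = q 1"
    using \<open>t > 0\<close> by simp
  then show ?thesis
    using \<open>t > 0\<close> by (simp add: q_def) (metis less_irrefl scaleR_scaleR right_inverse scaleR_one)
qed

text \<open>Along each ray \<open>t \<mapsto> g (t *\<^sub>R z)\<close>, \<open>t \<ge> 0\<close>, such a map is linear in \<open>t\<close>; its slope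
  \<open>g z\<close> is then the one-sided derivative at \<open>0\<close>, which is \<open>L z\<close>.\<close>

lemma positively_homogeneous_eq_derivative:
  fixes g :: "'a::real_normed_vector \<Rightarrow> 'b::real_normed_vector"
  assumes dg: "(g has_derivative L) (at 0)"
    and homogeneous: "\<And>t z. t > 0 \<Longrightarrow> g (t *\<^sub>R z) = t *\<^sub>R g z"
  shows "g = L"
proof
  fix z
  have "g 0 = 0"
    using homogeneous[of 2 0] by (simp add: scaleR_2)
  then have ray: "g (t *\<^sub>R z) = t *\<^sub>R g z" if "t \<in> {0..}" for t
    using that homogeneous[of t z] by (cases "t = 0") auto
  have slope: "((\<lambda>t. g (t *\<^sub>R z)) has_vector_derivative g z) (at 0 within {0..})"
    using ray by (rule has_vector_derivative_transform[where f = "\<lambda>t. t *\<^sub>R g z", rotated])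
      (auto intro!: derivative_eq_intros)
  have "(g has_derivative L) (at (0 *\<^sub>R z))"
    using dg by simp
  then have "((\<lambda>t. g (t *\<^sub>R z)) has_derivative (\<lambda>r. L (r *\<^sub>R z))) (at 0)"
    by (rule has_derivative_compose[rotated]) (auto intro!: derivative_eq_intros)
  then have "((\<lambda>t. g (t *\<^sub>R z)) has_vector_derivative L z) (at 0 within {0..})"
    using has_derivative_linear[OF dg]
    by (simp add: has_vector_derivative_def linear_scale has_derivative_at_withinI)
  with slope show "g z = L z"
    by (rule vector_derivative_unique_within[rotated]) (simp_all add: at_within_Ici_at_right)
qed

lemma Aut_subset_Sp:
  fixes \<Omega> :: "'a::euclidean_space \<Rightarrow> 'a \<Rightarrow> real"
  assumes \<Omega>: "symplectic_form \<Omega>"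
  shows "Aut (theta0 \<Omega>) \<subseteq> Sp \<Omega>"
proof
  fix g assume "g \<in> Aut (theta0 \<Omega>)"
  then have bij: "bij g" and smooth: "smooth_map g" and pb: "pullback g (theta0 \<Omega>) = theta0 \<Omega>"
    by (auto simp: Aut_def diffeomorphism_def)
  obtain D E where dg: "\<And>z. (g has_derivative D z) (at z)"
    and dD: "\<And>z v. ((\<lambda>y. D y v) has_derivative (\<lambda>u. E z u v)) (at z)"
    using smooth_map_second_derivative[OF smooth] by blast
  have lin: "linear (D z)" for z
    using dg has_derivative_linear by blast
  have invariant: "\<Omega> (g z) (D z v) = \<Omega> z v" for z v
    using fun_cong[OF fun_cong[OF pb, of z], of v] frechet_derivative_at[OF dg[of z]]
    by (simp add: pullback_def theta0_def)
  have symp: "\<Omega> (D z u) (D z v) = \<Omega> u v" for z u v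
    using \<Omega> dg dD invariant by (rule derivative_symplectic_if_theta0_invariant)
  have Euler: "g z = D z z" for z
    using \<Omega> lin symp invariant by (rule symplectic_pairing_eq)
  have "g (t *\<^sub>R z) = t *\<^sub>R g z" if "t > 0" for t z
    using dg Euler that by (rule Euler_relation_imp_positively_homogeneous)
  then have "g = D 0"
    using dg by (intro positively_homogeneous_eq_derivative)
  then show "g \<in> Sp \<Omega>"
    using bij lin symp by (simp add: Sp_def)
qed

theorem theorem1:
  fixes \<Omega> :: "'a::euclidean_space \<Rightarrow> 'a \<Rightarrow> real"
  assumes "symplectic_form \<Omega>"
  shows "Aut (theta0 \<Omega>) = Sp \<Omega>"
  using Aut_subset_Sp[OF assms] Sp_subset_Aut by blast

end
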